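(* Persistence equivalence and graph equivalence of discrete Morse functions on graphs are independent: there exist a finite tree $T$ with $n$ simplices and discrete Morse functions on $T$ that are graph equivalent but not persistence equivalent, and discrete Morse functions on $T$ that are persistence equivalent but not graph equivalent.
   Context: For a finite simple graph $G$, its simplices are its vertices and edges; write $v<e$ if vertex $v$ is an endpoint of edge $e$; $n$ is the total number of simplices. A discrete Morse function is a function $f$ from the simplices to $[0,n]$ such that: (i) $v<e$ implies $f(v)\le f(e)$; (ii) $\min f=0$; (iii) every value is attained by at most two simplices, and if $f(\sigma)=f(\tau)$ with $\sigma\neq\tau$ then one is an endpoint of the other; (iv) if a value $f(\sigma)$ is attained only by $\sigma$, then $f(\sigma)\in\mathbb{N}$; such $\sigma$ is critical and $f(\sigma)$ a critical value. With critical values $c_0<\dots<c_{m-1}$, the level subcomplexes $G_{c_i}=\{\sigma:f(\sigma)\le c_i\}$ form a filtration whose persistent homology (over a field) gives the persistence diagram $D_f$; $f,g$ are persistence equivalent if $D_f=D_g$. If $f,g$ have critical values $a_0<\dots<a_{m-1}$ and $c_0<\dots<c_{m-1}$ respectively (same number $m$), they are graph equivalent if $G_{a_i}\cong G_{c_i}$ as graphs for every $0\le i\le m-1$ (level subcomplexes taken for $f$ and $g$ respectively). *)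

theory Defs
  imports Complex_Main "HOL-Library.Function_Algebras" "HOL-Library.Extended_Real"
begin

text \<open>Its simplices are the singletons {v} (vertices) and the edges;
a vertex v is an endpoint of e iff {v} is a proper subset of e.\<close>

definition simple_graph :: "'a set \<Rightarrow> 'a set set \<Rightarrow> bool" where
  "simple_graph V E \<longleftrightarrow> finite V \<and>
     (\<forall>e\<in>E. \<exists>u v. u \<in> V \<and> v \<in> V \<and> u \<noteq> v \<and> e = {u, v})"

definition adj :: "'a set set \<Rightarrow> 'a \<Rightarrow> 'a \<Rightarrow> bool" where
  "adj E u v \<longleftrightarrow> u \<noteq> v \<and> {u, v} \<in> E"

definition connected_graph :: "'a set \<Rightarrow> 'a set set \<Rightarrow> bool" where
  "connected_graph V E \<longleftrightarrow>
     (\<forall>u\<in>V. \<forall>v\<in>V. (u, v) \<in> {(x, y). adj E x y}\<^sup>*)"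

definition has_cycle :: "'a set \<Rightarrow> 'a set set \<Rightarrow> bool" where
  "has_cycle V E \<longleftrightarrow> (\<exists>cs. 3 \<le> length cs \<and> distinct cs \<and> set cs \<subseteq> V \<and>
     (\<forall>i < length cs. adj E (cs ! i) (cs ! ((i + 1) mod length cs))))"

definition is_tree :: "'a set \<Rightarrow> 'a set set \<Rightarrow> bool" where
  "is_tree V E \<longleftrightarrow> simple_graph V E \<and> V \<noteq> {} \<and> connected_graph V E \<and> \<not> has_cycle V E"

definition simplices :: "'a set \<Rightarrow> 'a set set \<Rightarrow> 'a set set" where
  "simplices V E = (\<lambda>v. {v}) ` V \<union> E"

definition dmf :: "'a set \<Rightarrow> 'a set set \<Rightarrow> ('a set \<Rightarrow> real) \<Rightarrow> bool" where
  "dmf V E f \<longleftrightarrow> (let S = simplices V E; n = card S in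
     (\<forall>\<sigma>\<in>S. 0 \<le> f \<sigma> \<and> f \<sigma> \<le> real n) \<and>
     (\<forall>v\<in>V. \<forall>e\<in>E. v \<in> e \<longrightarrow> f {v} \<le> f e) \<and>
     (\<exists>\<sigma>\<in>S. f \<sigma> = 0) \<and>
     (\<forall>\<sigma>\<in>S. card {\<tau>\<in>S. f \<tau> = f \<sigma>} \<le> 2) \<and>
     (\<forall>\<sigma>\<in>S. \<forall>\<tau>\<in>S. \<sigma> \<noteq> \<tau> \<and> f \<sigma> = f \<tau> \<longrightarrow> \<sigma> \<subset> \<tau> \<or> \<tau> \<subset> \<sigma>) \<and>
     (\<forall>\<sigma>\<in>S. card {\<tau>\<in>S. f \<tau> = f \<sigma>} = 1 \<longrightarrow> f \<sigma> \<in> \<nat>))"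

definition critical :: "'a set \<Rightarrow> 'a set set \<Rightarrow> ('a set \<Rightarrow> real) \<Rightarrow> 'a set \<Rightarrow> bool" where
  "critical V E f \<sigma> \<longleftrightarrow> \<sigma> \<in> simplices V E \<and>
     card {\<tau>\<in>simplices V E. f \<tau> = f \<sigma>} = 1"

definition crit_vals :: "'a set \<Rightarrow> 'a set set \<Rightarrow> ('a set \<Rightarrow> real) \<Rightarrow> real list" where
  "crit_vals V E f = sorted_list_of_set (f ` {\<sigma>. critical V E f \<sigma>})"

definition level :: "'a set \<Rightarrow> 'a set set \<Rightarrow> ('a set \<Rightarrow> real) \<Rightarrow> real \<Rightarrow> 'a set set" where
  "level V E f c = {\<sigma>\<in>simplices V E. f \<sigma> \<le> c}"

definition cverts :: "'a set set \<Rightarrow> 'a set" where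
  "cverts K = {v. {v} \<in> K}"

definition complex_iso :: "'a set set \<Rightarrow> 'b set set \<Rightarrow> bool" where
  "complex_iso K L \<longleftrightarrow> (\<exists>\<phi>. bij_betw \<phi> (cverts K) (cverts L) \<and>
     (\<forall>u\<in>cverts K. \<forall>v\<in>cverts K. u \<noteq> v \<longrightarrow> ({u, v} \<in> K \<longleftrightarrow> {\<phi> u, \<phi> v} \<in> L)))"

definition graph_equiv :: "'a set \<Rightarrow> 'a set set \<Rightarrow> ('a set \<Rightarrow> real) \<Rightarrow> ('a set \<Rightarrow> real) \<Rightarrow> bool" where
  "graph_equiv V E f g \<longleftrightarrow> length (crit_vals V E f) = length (crit_vals V E g) \<and>
     (\<forall>i < length (crit_vals V E f).
        complex_iso (level V E f (crit_vals V E f ! i)) (level V E g (crit_vals V E g ! i)))"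

text \<open>p-chains of a complex K with coefficients in a field 'k: finitely supported
(K is finite) functions on the p-simplices (sets of card p+1).\<close>
definition chains :: "'a set set \<Rightarrow> nat \<Rightarrow> ('a set \<Rightarrow> 'k::field) set" where
  "chains K p = {x. \<forall>\<sigma>. x \<sigma> \<noteq> 0 \<longrightarrow> \<sigma> \<in> K \<and> card \<sigma> = Suc p}"

text \<open>Boundary of 1-chains, edge {u,v} with u < v oriented as [u,v], so its
boundary is v - u.  Graphs have no simplices of dimension 2 or more, so all
other boundary maps are zero.\<close>
definition bd1 :: "('a::linorder set \<Rightarrow> 'k::field) \<Rightarrow> 'a set \<Rightarrow> 'k" where
  "bd1 x = (\<lambda>\<sigma>. if card \<sigma> = 1 then
      (\<Sum>e\<in>{e. card e = 2 \<and> \<sigma> \<subset> e \<and> x e \<noteq> 0}.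
          if the_elem \<sigma> = Max e then x e else - x e)
    else 0)"

definition bd :: "nat \<Rightarrow> ('a::linorder set \<Rightarrow> 'k::field) \<Rightarrow> 'a set \<Rightarrow> 'k" where
  "bd p x = (if p = 1 then bd1 x else 0)"

definition cycles :: "'a::linorder set set \<Rightarrow> nat \<Rightarrow> ('a set \<Rightarrow> 'k::field) set" where
  "cycles K p = {x \<in> chains K p. bd p x = 0}"

definition bdries :: "'a::linorder set set \<Rightarrow> nat \<Rightarrow> ('a set \<Rightarrow> 'k::field) set" where
  "bdries K p = bd (Suc p) ` chains K (Suc p)"

definition fdim :: "('b \<Rightarrow> 'k::field) set \<Rightarrow> nat" where
  "fdim A = vector_space.dim (\<lambda>c x. (\<lambda>i. c * x i)) A"

text \<open>Persistent Betti number beta_p^{K,L} = dim Z_p(K) - dim (Z_p(K) \<inter> B_p(L)),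
the rank of H_p(K) -> H_p(L) induced by inclusion.\<close>
definition pers_betti :: "'k::field itself \<Rightarrow> 'a::linorder set set \<Rightarrow> 'a set set \<Rightarrow> nat \<Rightarrow> int" where
  "pers_betti _ K L p =
     int (fdim (cycles K p :: ('a set \<Rightarrow> 'k) set)) - int (fdim (cycles K p \<inter> bdries L p :: ('a set \<Rightarrow> 'k) set))"

text \<open>Persistence diagram in dimension p of the filtration by level subcomplexes
at the critical values, as a multiplicity function on points (birth, death),
death = \<infinity> for essential classes.\<close>
definition pdiag :: "'k::field itself \<Rightarrow> 'a::linorder set \<Rightarrow> 'a set set \<Rightarrow> ('a set \<Rightarrow> real) \<Rightarrow> nat
    \<Rightarrow> real \<times> ereal \<Rightarrow> int" where
  "pdiag k V E f p = (\<lambda>pt.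
     (let cs = crit_vals V E f; m = length cs;
          \<beta> = (\<lambda>i j. pers_betti k (level V E f (cs ! i)) (level V E f (cs ! j)) p);
          \<beta>' = (\<lambda>i j. if i = 0 then 0 else \<beta> (i - 1) j);
          mu = (\<lambda>i j. (\<beta> i (j - 1) - \<beta> i j) - (\<beta>' i (j - 1) - \<beta>' i j));
          mu_inf = (\<lambda>i. \<beta> i (m - 1) - \<beta>' i (m - 1))
      in (\<Sum>i<m. \<Sum>j\<in>{i<..<m}. if pt = (cs ! i, ereal (cs ! j)) then mu i j else 0)
       + (\<Sum>i<m. if pt = (cs ! i, \<infinity>) then mu_inf i else 0)))"

definition pers_equiv :: "'k::field itself \<Rightarrow> 'a::linorder set \<Rightarrow> 'a set set
    \<Rightarrow> ('a set \<Rightarrow> real) \<Rightarrow> ('a set \<Rightarrow> real) \<Rightarrow> bool" where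
  "pers_equiv k V E f g \<longleftrightarrow> (\<forall>p. pdiag k V E f p = pdiag k V E g p)"

end

theory Submission
  imports Defs
begin

text \<open>
  All examples live on the path 0 -- 1 -- 2.  The function \<open>morse_f\<close> has critical values
  0 < 1 < 2 with level subcomplexes a point, two points and the edge {0,1}, so its
  0-dimensional diagram consists of (0, \<infinity>) and (1, 2).  Moving the critical value 2 to 4
  (\<open>morse_f_stretched\<close>) changes no level subcomplex, hence preserves graph equivalence, but
  moves the point (1, 2) to (1, 4).  The function \<open>morse_g\<close> has level subcomplexes a point,
  the two endpoints and the whole path; the last has three vertices, so \<open>morse_g\<close> is not
  graph equivalent to \<open>morse_f\<close>, yet both filtrations have the same table of persistent Betti
  numbers and therefore the same diagrams.

  Those Betti numbers are computed by linear algebra: in dimension 0 the rank of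
  H_0(K) \<rightarrow> H_0(L) is the number of vertices of K minus dim (Z_0(K) \<inter> B_0(L)), and B_0(L) is
  spanned by the boundaries of the edges of L.  The two edge boundaries of the path are
  linearly independent, which also rules out 1-cycles.
\<close>

section \<open>Linear algebra in function spaces\<close>

interpretation funvs: vector_space "\<lambda>(c::'k::field) (x::'b \<Rightarrow> 'k). (\<lambda>i. c * x i)"
  by unfold_locales (auto simp: fun_eq_iff algebra_simps)

lemma fdim_eq_dim: "fdim A = funvs.dim A"
  unfolding fdim_def ..

lemma fdim_le_zero: "A \<subseteq> {0} \<Longrightarrow> fdim A = 0"
  unfolding fdim_eq_dim by (rule funvs.dim_unique[where B = "{}"]) (auto simp: funvs.independent_empty)

lemma fdim_span_independent: "funvs.independent B \<Longrightarrow> fdim (funvs.span B) = card B"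
  unfolding fdim_eq_dim by (rule funvs.dim_span_eq_card_independent)

lemma sum_fun_apply: "(sum f A) t = (\<Sum>s\<in>A. f s t)"
  by (induction A rule: infinite_finite_induct) auto

definition delta :: "'b \<Rightarrow> 'b \<Rightarrow> 'k::zero_neq_one" where
  "delta s = (\<lambda>t. if t = s then 1 else 0)"

lemma delta_apply_eq_1_iff [simp]: "delta s t = 1 \<longleftrightarrow> t = s"
  by (simp add: delta_def)

lemma inj_delta: "inj delta"
  by (rule injI) (metis delta_apply_eq_1_iff)

lemma independent_delta: "funvs.independent (delta ` A :: ('b \<Rightarrow> 'k::field) set)"
  unfolding funvs.independent_explicit_module
proof clarify
  fix t u v
  assume t: "finite t" "t \<subseteq> delta ` A" and lin: "(\<Sum>v\<in>t. (\<lambda>i. u v * v i)) = (0 :: 'b \<Rightarrow> 'k)"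
    and "v \<in> t"
  then obtain s where v: "v = delta s" by blast
  have "0 = (\<Sum>v\<in>t. (\<lambda>i. u v * v i)) s"
    using lin by simp
  also have "\<dots> = (\<Sum>w\<in>t. if w = v then u w else 0)"
    unfolding sum_fun_apply using t(2) v by (intro sum.cong) (fastforce simp: delta_def)+
  also have "\<dots> = u v"
    using t(1) \<open>v \<in> t\<close> by simp
  finally show "u v = 0" by simp
qed

lemma supported_eq_span_delta:
  assumes "finite A"
  shows "{x :: 'b \<Rightarrow> 'k::field. \<forall>\<sigma>. x \<sigma> \<noteq> 0 \<longrightarrow> \<sigma> \<in> A} = funvs.span (delta ` A)"
proof
  show "{x :: 'b \<Rightarrow> 'k. \<forall>\<sigma>. x \<sigma> \<noteq> 0 \<longrightarrow> \<sigma> \<in> A} \<subseteq> funvs.span (delta ` A)"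
  proof
    fix x :: "'b \<Rightarrow> 'k" assume x: "x \<in> {x. \<forall>\<sigma>. x \<sigma> \<noteq> 0 \<longrightarrow> \<sigma> \<in> A}"
    have "(\<Sum>s\<in>A. x s * delta s i) = x i" for i
    proof -
      have "(\<Sum>s\<in>A. x s * delta s i) = (\<Sum>s\<in>A. if i = s then x s else 0)"
        by (intro sum.cong) (auto simp: delta_def)
      then show ?thesis
        using x assms by (auto simp: sum.delta)
    qed
    then have "x = (\<Sum>s\<in>A. (\<lambda>i. x s * delta s i))"
      by (simp add: fun_eq_iff sum_fun_apply)
    also have "\<dots> \<in> funvs.span (delta ` A)"
      by (intro funvs.span_sum funvs.span_scale funvs.span_base) auto
    finally show "x \<in> funvs.span (delta ` A)" .
  qed
  show "funvs.span (delta ` A) \<subseteq> {x :: 'b \<Rightarrow> 'k. \<forall>\<sigma>. x \<sigma> \<noteq> 0 \<longrightarrow> \<sigma> \<in> A}"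
  proof (rule funvs.span_minimal)
    show "funvs.subspace {x :: 'b \<Rightarrow> 'k. \<forall>\<sigma>. x \<sigma> \<noteq> 0 \<longrightarrow> \<sigma> \<in> A}"
      unfolding funvs.subspace_def by auto (metis add.left_neutral)
  qed (auto simp: delta_def split: if_splits)
qed

lemma fdim_supported:
  "finite A \<Longrightarrow> fdim {x :: 'b \<Rightarrow> 'k::field. \<forall>\<sigma>. x \<sigma> \<noteq> 0 \<longrightarrow> \<sigma> \<in> A} = card A"
  by (simp add: supported_eq_span_delta fdim_span_independent independent_delta
      card_image inj_on_subset[OF inj_delta])

lemma span_pair:
  "funvs.span {u, v} = {(\<lambda>i. a * u i + b * v i) | a b. True}"
proof -
  have "x \<in> funvs.span {u, v} \<longleftrightarrow> (\<exists>a b. x = (\<lambda>i. a * u i + b * v i))" for x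
  proof
    assume "\<exists>a b. x = (\<lambda>i. a * u i + b * v i)"
    then obtain a b where "x = (\<lambda>i. a * u i + b * v i)" by blast
    then have "x - (\<lambda>i. a * u i) = (\<lambda>i. b * v i)" by (simp add: fun_eq_iff)
    then show "x \<in> funvs.span {u, v}"
      unfolding funvs.span_breakdown_eq funvs.span_singleton by auto
  next
    assume "x \<in> funvs.span {u, v}"
    then obtain a b where "x - (\<lambda>i. a * u i) = (\<lambda>i. b * v i)"
      unfolding funvs.span_breakdown_eq funvs.span_singleton by auto
    then show "\<exists>a b. x = (\<lambda>i. a * u i + b * v i)"
      by (auto simp: fun_eq_iff algebra_simps)
  qed
  then show ?thesis by blast
qed

section \<open>Chains, cycles and boundaries of graph complexes\<close>

definition edges :: "'a set set \<Rightarrow> 'a set set" where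
  "edges K = {e \<in> K. card e = 2}"

lemma finite_edges: "finite K \<Longrightarrow> finite (edges K)"
  by (simp add: edges_def)

definition edge_bd :: "'a::linorder set \<Rightarrow> 'a set \<Rightarrow> 'k::field" where
  "edge_bd e = delta {Max e} - delta {Min e}"

lemma card_2_eq_Min_Max:
  assumes "card (e :: 'a::linorder set) = 2"
  shows "e = {Min e, Max e}" "Min e < Max e"
proof -
  obtain a b where "e = {a, b}" "a \<noteq> b"
    using assms by (auto simp: card_2_iff)
  then show "e = {Min e, Max e}" "Min e < Max e"
    by (cases "a < b"; auto simp: max_def min_def)+
qed

lemma edge_bd_singleton:
  assumes "card e = 2"
  shows "edge_bd e {v} = (if v = Max e then 1 else if v = Min e then -1 else 0)"
  using card_2_eq_Min_Max[OF assms] by (auto simp: edge_bd_def delta_def)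

lemma edge_bd_singleton_neq_0_iff:
  assumes "card e = 2"
  shows "edge_bd e {v} \<noteq> (0::'k::field) \<longleftrightarrow> v \<in> e"
proof -
  have "v \<in> e \<longleftrightarrow> v = Min e \<or> v = Max e"
    using card_2_eq_Min_Max[OF assms] by blast
  then show ?thesis
    by (simp add: edge_bd_singleton[OF assms])
qed

lemma inj_on_edge_bd: "inj_on (edge_bd :: 'a::linorder set \<Rightarrow> 'a set \<Rightarrow> 'k::field) {e. card e = 2}"
proof (rule inj_onI)
  fix e e' :: "'a set"
  assume "e \<in> {e. card e = 2}" "e' \<in> {e. card e = 2}" and eq: "(edge_bd e :: 'a set \<Rightarrow> 'k) = edge_bd e'"
  then have "v \<in> e \<longleftrightarrow> v \<in> e'" for v
    using edge_bd_singleton_neq_0_iff[of e v, where 'k='k] edge_bd_singleton_neq_0_iff[of e' v, where 'k='k]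
    by simp
  then show "e = e'" by blast
qed

lemma inj_on_edge_bd_edges: "inj_on (edge_bd :: 'a::linorder set \<Rightarrow> 'a set \<Rightarrow> 'k::field) (edges K)"
  by (rule inj_on_subset[OF inj_on_edge_bd]) (auto simp: edges_def)

lemma independent_edge_bd_single:
  assumes "card e = 2"
  shows "funvs.independent {edge_bd e :: 'a::linorder set \<Rightarrow> 'k::field}"
proof -
  have "(edge_bd e :: 'a set \<Rightarrow> 'k) {Max e} = 1"
    by (simp add: edge_bd_singleton[OF assms])
  then have "(edge_bd e :: 'a set \<Rightarrow> 'k) \<noteq> 0"
    by auto
  then show ?thesis
    by (simp add: funvs.independent_insert)
qed

lemma bd1_eq_sum_edge_bd:
  assumes "x \<in> chains K 1" "finite K"
  shows "bd 1 x = (\<Sum>e\<in>edges K. (\<lambda>\<sigma>. x e * edge_bd e \<sigma>))"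
proof
  fix \<sigma> :: "'a set"
  have x: "x e \<noteq> 0 \<Longrightarrow> e \<in> edges K" for e
    using assms(1) by (auto simp: chains_def edges_def)
  show "bd 1 x \<sigma> = (\<Sum>e\<in>edges K. (\<lambda>\<sigma>. x e * edge_bd e \<sigma>)) \<sigma>"
  proof (cases "card \<sigma> = 1")
    case False
    then have "\<sigma> \<noteq> {Max e}" "\<sigma> \<noteq> {Min e}" for e :: "'a set"
      by auto
    then show ?thesis
      using False by (simp add: bd_def bd1_def sum_fun_apply edge_bd_def delta_def)
  next
    case True
    then obtain v where \<sigma>: "\<sigma> = {v}"
      by (auto simp: card_1_singleton_iff)
    define h where "h e = (if v = Max e then x e else - x e)" for e
    have "{e. card e = 2 \<and> \<sigma> \<subset> e \<and> x e \<noteq> 0} = {e \<in> edges K. v \<in> e \<and> x e \<noteq> 0}"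
      using x by (force simp: \<sigma> edges_def)
    then have "bd 1 x \<sigma> = sum h {e \<in> edges K. v \<in> e \<and> x e \<noteq> 0}"
      by (simp add: bd_def bd1_def \<sigma> h_def)
    also have "\<dots> = (\<Sum>e\<in>edges K. if v \<in> e \<and> x e \<noteq> 0 then h e else 0)"
      using assms(2) by (intro sum.inter_filter) (simp add: edges_def)
    also have "\<dots> = (\<Sum>e\<in>edges K. x e * edge_bd e \<sigma>)"
    proof (intro sum.cong refl)
      fix e assume "e \<in> edges K"
      then have "card e = 2" by (simp add: edges_def)
      then have "v \<in> e \<longleftrightarrow> v = Min e \<or> v = Max e" "Min e \<noteq> Max e"
        using card_2_eq_Min_Max[of e] by auto
      then show "(if v \<in> e \<and> x e \<noteq> 0 then h e else 0) = x e * edge_bd e \<sigma>"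
        by (auto simp: \<sigma> h_def edge_bd_singleton[OF \<open>card e = 2\<close>])
    qed
    finally show ?thesis
      by (simp add: sum_fun_apply)
  qed
qed

lemma bdries0_eq_span:
  assumes "finite K"
  shows "(bdries K 0 :: ('a::linorder set \<Rightarrow> 'k::field) set) = funvs.span (edge_bd ` edges K)"
proof
  show "(bdries K 0 :: ('a set \<Rightarrow> 'k) set) \<subseteq> funvs.span (edge_bd ` edges K)"
  proof
    fix y :: "'a set \<Rightarrow> 'k" assume "y \<in> bdries K 0"
    then obtain x where "x \<in> chains K 1" "y = bd 1 x"
      by (auto simp: bdries_def)
    then have "y = (\<Sum>e\<in>edges K. (\<lambda>\<sigma>. x e * edge_bd e \<sigma>))"
      using bd1_eq_sum_edge_bd assms by blast
    also have "\<dots> \<in> funvs.span (edge_bd ` edges K)"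
      by (intro funvs.span_sum funvs.span_scale funvs.span_base) auto
    finally show "y \<in> funvs.span (edge_bd ` edges K)" .
  qed
next
  show "funvs.span (edge_bd ` edges K) \<subseteq> (bdries K 0 :: ('a set \<Rightarrow> 'k) set)"
  proof
    fix y :: "'a set \<Rightarrow> 'k" assume "y \<in> funvs.span (edge_bd ` edges K)"
    then obtain u where y: "y = (\<Sum>w\<in>edge_bd ` edges K. (\<lambda>\<sigma>. u w * w \<sigma>))"
      using funvs.span_finite[OF finite_imageI[OF finite_edges[OF assms]]] by auto
    define x where "x e = (if e \<in> edges K then u (edge_bd e) else 0)" for e
    have x: "x \<in> chains K 1"
      by (auto simp: x_def chains_def edges_def)
    have "bd 1 x = (\<Sum>e\<in>edges K. (\<lambda>\<sigma>. x e * edge_bd e \<sigma>))"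
      using bd1_eq_sum_edge_bd[OF x assms] .
    also have "\<dots> = (\<Sum>e\<in>edges K. (\<lambda>\<sigma>. u (edge_bd e) * edge_bd e \<sigma>))"
      by (simp add: x_def)
    also have "\<dots> = y"
      unfolding y by (simp add: sum.reindex[OF inj_on_edge_bd_edges])
    finally show "y \<in> bdries K 0"
      using x by (auto simp: bdries_def)
  qed
qed

lemma bdries_mono: "K \<subseteq> L \<Longrightarrow> bdries K p \<subseteq> bdries L p"
  by (auto simp: bdries_def chains_def)

lemma cycles_0_eq: "cycles K 0 = {x. \<forall>\<sigma>. x \<sigma> \<noteq> 0 \<longrightarrow> \<sigma> \<in> {\<sigma> \<in> K. card \<sigma> = 1}}"
  by (auto simp: cycles_def chains_def bd_def)

lemma fdim_cycles_0:
  "finite K \<Longrightarrow> fdim (cycles K 0 :: ('a::linorder set \<Rightarrow> 'k::field) set) = card {\<sigma> \<in> K. card \<sigma> = 1}"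
  unfolding cycles_0_eq by (rule fdim_supported) simp

lemma cycles_mono: "K \<subseteq> L \<Longrightarrow> cycles K p \<subseteq> cycles L p"
  by (auto simp: cycles_def chains_def)

lemma cycles_subset_0_above_dim_1:
  assumes "\<forall>\<sigma>\<in>K. card \<sigma> \<le> 2" "2 \<le> p"
  shows "cycles K p \<subseteq> {0}"
  using assms by (force simp: cycles_def chains_def)

lemma cycles_1_subset_0:
  assumes "finite K" and indep: "funvs.independent (edge_bd ` edges K :: ('a::linorder set \<Rightarrow> 'k::field) set)"
  shows "(cycles K 1 :: ('a set \<Rightarrow> 'k) set) \<subseteq> {0}"
proof
  fix x :: "'a set \<Rightarrow> 'k" assume "x \<in> cycles K 1"
  then have x: "x \<in> chains K 1" "bd 1 x = 0"
    by (auto simp: cycles_def)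
  define u where "u w = x (the_inv_into (edges K) edge_bd w)" for w :: "'a set \<Rightarrow> 'k"
  have "(\<Sum>w\<in>edge_bd ` edges K. (\<lambda>\<sigma>. u w * w \<sigma>)) = (\<Sum>e\<in>edges K. (\<lambda>\<sigma>. x e * edge_bd e \<sigma>))"
    by (simp add: u_def sum.reindex[OF inj_on_edge_bd_edges] the_inv_into_f_f[OF inj_on_edge_bd_edges])
  also have "\<dots> = 0"
    using bd1_eq_sum_edge_bd[OF x(1) assms(1)] x(2) by simp
  finally have "u (edge_bd e) = 0" if "e \<in> edges K" for e
    using that finite_edges[OF assms(1)] by (intro funvs.independentD[OF indep]) auto
  then have "x e = 0" if "e \<in> edges K" for e
    using that by (simp add: u_def the_inv_into_f_f[OF inj_on_edge_bd_edges])
  moreover have "x e = 0" if "e \<notin> edges K" for e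
    using that x(1) by (auto simp: chains_def edges_def)
  ultimately show "x \<in> {0}"
    by (auto simp: fun_eq_iff)
qed

section \<open>Persistent Betti numbers and persistence diagrams\<close>

lemma pers_betti_eq_0:
  assumes "(cycles K p :: ('a::linorder set \<Rightarrow> 'k::field) set) \<subseteq> {0}"
  shows "pers_betti TYPE('k) K L p = 0"
proof -
  have "(cycles K p \<inter> bdries L p :: ('a set \<Rightarrow> 'k) set) \<subseteq> {0}"
    using assms by blast
  then show ?thesis
    using assms by (simp add: pers_betti_def fdim_le_zero)
qed

lemma pers_betti_0:
  "finite K \<Longrightarrow> pers_betti TYPE('k::field) K L 0 =
     int (card {\<sigma> \<in> K. card \<sigma> = 1}) - int (fdim (cycles K 0 \<inter> bdries L 0 :: ('a::linorder set \<Rightarrow> 'k) set))"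
  by (simp add: pers_betti_def fdim_cycles_0)

lemma pers_betti_0_edgeless:
  assumes "finite K" "finite L" "edges L = {}"
  shows "pers_betti TYPE('k::field) K L 0 = card {\<sigma> \<in> K. card \<sigma> = 1}"
  using assms by (simp add: pers_betti_0 bdries0_eq_span fdim_le_zero)

lemma pers_betti_0_edges_within:
  assumes "finite K" "finite L" and verts: "\<And>e v. e \<in> edges L \<Longrightarrow> v \<in> e \<Longrightarrow> {v} \<in> K"
    and indep: "funvs.independent (edge_bd ` edges L :: ('a::linorder set \<Rightarrow> 'k::field) set)"
  shows "pers_betti TYPE('k) K L 0 = int (card {\<sigma> \<in> K. card \<sigma> = 1}) - int (card (edges L))"
proof -
  let ?Z = "funvs.span (delta ` {\<sigma> \<in> K. card \<sigma> = 1}) :: ('a set \<Rightarrow> 'k) set"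
  have Z: "cycles K 0 = ?Z"
    unfolding cycles_0_eq by (rule supported_eq_span_delta) (simp add: assms(1))
  have "edge_bd e \<in> ?Z" if "e \<in> edges L" for e
  proof -
    have "e = {Min e, Max e}"
      using that card_2_eq_Min_Max by (auto simp: edges_def)
    then have "Min e \<in> e" "Max e \<in> e"
      by blast+
    then have "{Min e} \<in> {\<sigma> \<in> K. card \<sigma> = 1}" "{Max e} \<in> {\<sigma> \<in> K. card \<sigma> = 1}"
      using verts[OF that] by auto
    then show ?thesis
      unfolding edge_bd_def by (intro funvs.span_diff funvs.span_base imageI)
  qed
  then have "(bdries L 0 :: ('a set \<Rightarrow> 'k) set) \<subseteq> cycles K 0"
    unfolding Z bdries0_eq_span[OF assms(2)] by (intro funvs.span_minimal funvs.subspace_span) auto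
  then have "fdim (cycles K 0 \<inter> bdries L 0 :: ('a set \<Rightarrow> 'k) set) = card (edges L)"
    by (simp add: Int_absorb1 bdries0_eq_span[OF assms(2)] fdim_span_independent[OF indep]
        card_image[OF inj_on_edge_bd_edges])
  then show ?thesis
    using assms(1) by (simp add: pers_betti_0)
qed

lemma pers_betti_two_vertices:
  fixes a b :: "'a::linorder"
  assumes "a \<noteq> b"
  shows "pers_betti TYPE('k::field) {{a}, {b}} {{a}, {b}} 0 = 2"
proof -
  have "edges {{a}, {b}} = {}"
    by (auto simp: edges_def)
  moreover have "{\<sigma> \<in> {{a}, {b}}. card \<sigma> = 1} = {{a}, {b}}"
    by auto
  ultimately show ?thesis
    using assms by (simp add: pers_betti_0_edgeless)
qed

lemma pers_betti_two_vertices_edge: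
  fixes a b :: "'a::linorder"
  assumes "a \<noteq> b"
  shows "pers_betti TYPE('k::field) {{a}, {b}} {{a}, {b}, {a, b}} 0 = 1"
    and "pers_betti TYPE('k) {{a}, {b}, {a, b}} {{a}, {b}, {a, b}} 0 = 1"
proof -
  have edges: "edges {{a}, {b}, {a, b}} = {{a, b}}"
    using assms by (auto simp: edges_def)
  have indep: "funvs.independent (edge_bd ` edges {{a}, {b}, {a, b}} :: ('a set \<Rightarrow> 'k) set)"
    unfolding edges using assms independent_edge_bd_single[of "{a, b}"] by simp
  have verts: "{\<sigma> \<in> {{a}, {b}}. card \<sigma> = 1} = {{a}, {b}}" "{\<sigma> \<in> {{a}, {b}, {a, b}}. card \<sigma> = 1} = {{a}, {b}}"
    using assms by auto
  have inside: "{v} \<in> {{a}, {b}}" "{v} \<in> {{a}, {b}, {a, b}}"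
    if "e \<in> edges {{a}, {b}, {a, b}}" "v \<in> e" for e v
    using that by (auto simp: edges)
  have "pers_betti TYPE('k) {{a}, {b}} {{a}, {b}, {a, b}} 0
      = int (card {\<sigma> \<in> {{a}, {b}}. card \<sigma> = 1}) - int (card (edges {{a}, {b}, {a, b}}))"
    "pers_betti TYPE('k) {{a}, {b}, {a, b}} {{a}, {b}, {a, b}} 0
      = int (card {\<sigma> \<in> {{a}, {b}, {a, b}}. card \<sigma> = 1}) - int (card (edges {{a}, {b}, {a, b}}))"
    by (rule pers_betti_0_edges_within; use inside indep in simp)+
  then show "pers_betti TYPE('k) {{a}, {b}} {{a}, {b}, {a, b}} 0 = 1"
    and "pers_betti TYPE('k) {{a}, {b}, {a, b}} {{a}, {b}, {a, b}} 0 = 1"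
    unfolding verts edges using assms by simp_all
qed

lemma level_subset_simplices: "level V E f c \<subseteq> simplices V E"
  by (auto simp: level_def)

definition level_betti :: "'k::field itself \<Rightarrow> 'a::linorder set \<Rightarrow> 'a set set \<Rightarrow> ('a set \<Rightarrow> real)
    \<Rightarrow> nat \<Rightarrow> nat \<Rightarrow> nat \<Rightarrow> int" where
  "level_betti k V E f p i j =
     pers_betti k (level V E f (crit_vals V E f ! i)) (level V E f (crit_vals V E f ! j)) p"

lemma pdiag_cong:
  assumes cs: "crit_vals V E f = crit_vals V E g"
    and betti: "\<And>i j. i \<le> j \<Longrightarrow> j < length (crit_vals V E f) \<Longrightarrow>
      level_betti k V E f p i j = level_betti k V E g p i j"
  shows "pdiag k V E f p = pdiag k V E g p"
  unfolding pdiag_def Let_def level_betti_def[symmetric]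
  \<comment> \<open>fold \<open>level_betti\<close> for \<open>g\<close> before its critical values are replaced by those of \<open>f\<close>\<close>
  unfolding cs[symmetric]
  using betti by (intro ext arg_cong2[where f = "(+)"] sum.cong refl) auto

lemma sum_at_index_pair:
  assumes "distinct cs" "i < j" "j < length cs"
  shows "(\<Sum>i'<length cs. \<Sum>j'\<in>{i'<..<length cs}.
            if (cs ! i, ereal (cs ! j)) = (cs ! i', ereal (cs ! j')) then F i' j' else 0) = F i j"
proof -
  have "(\<Sum>j'\<in>{i'<..<length cs}. if (cs ! i, ereal (cs ! j)) = (cs ! i', ereal (cs ! j')) then F i' j' else 0)
      = (if i' = i then F i j else 0)" if "i' < length cs" for i'
  proof -
    have "(\<Sum>j'\<in>{i'<..<length cs}. if (cs ! i, ereal (cs ! j)) = (cs ! i', ereal (cs ! j')) then F i' j' else 0)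
        = (\<Sum>j'\<in>{i'<..<length cs}. if i' = i \<and> j' = j then F i' j' else 0)"
      using assms that by (intro sum.cong) (auto simp: nth_eq_iff_index_eq)
    then show ?thesis
      using assms by (simp add: sum.delta')
  qed
  then show ?thesis
    using assms by simp
qed

lemma pdiag_finite_point:
  assumes "0 < i" "i < j" "j < length (crit_vals V E f)"
  shows "pdiag k V E f p (crit_vals V E f ! i, ereal (crit_vals V E f ! j)) =
    (level_betti k V E f p i (j - 1) - level_betti k V E f p i j)
    - (level_betti k V E f p (i - 1) (j - 1) - level_betti k V E f p (i - 1) j)"
proof -
  have "distinct (crit_vals V E f)"
    by (simp add: crit_vals_def)
  then show ?thesis
    unfolding pdiag_def Let_def level_betti_def[symmetric]
    using assms by (subst sum_at_index_pair) auto
qed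

lemma pdiag_non_critical_death:
  "d \<notin> set (crit_vals V E f) \<Longrightarrow> pdiag k V E f p (b, ereal d) = 0"
  unfolding pdiag_def Let_def by (auto intro!: sum.neutral)

lemma graph_equiv_if_same_levels:
  assumes "length (crit_vals V E f) = length (crit_vals V E g)"
    and "\<And>i. i < length (crit_vals V E f) \<Longrightarrow>
      level V E f (crit_vals V E f ! i) = level V E g (crit_vals V E g ! i)"
  shows "graph_equiv V E f g"
proof -
  have "complex_iso K K" for K :: "'a set set"
    unfolding complex_iso_def by (rule exI[of _ id]) simp
  then show ?thesis
    using assms by (simp add: graph_equiv_def)
qed

lemma complex_iso_card_cverts: "complex_iso K L \<Longrightarrow> card (cverts K) = card (cverts L)"
  unfolding complex_iso_def by (auto intro: bij_betw_same_card)

section \<open>The path with three vertices\<close>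

lemma Collect_mem_insert:
  "{x \<in> insert a A. P x} = (if P a then insert a {x \<in> A. P x} else {x \<in> A. P x})"
  by auto

definition path_V :: "nat set" where
  "path_V = {0, 1, 2}"

definition path_E :: "nat set set" where
  "path_E = {{0, 1}, {1, 2}}"

abbreviation path :: "nat set set" where
  "path \<equiv> simplices path_V path_E"

lemma path_eq: "path = {{0}, {1}, {2}, {0, 1}, {1, 2}}"
  by (auto simp: simplices_def path_V_def path_E_def)

lemma finite_path: "finite path"
  by (simp add: path_eq)

lemma edges_path: "edges path = {{0, 1}, {1, 2}}"
  by (auto simp: path_eq edges_def)

lemma no_cycle_path: "\<not> has_cycle path_V path_E"
proof
  assume "has_cycle path_V path_E"
  then obtain cs where cs: "3 \<le> length cs" "distinct cs" "set cs \<subseteq> path_V"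
    "\<forall>i < length cs. adj path_E (cs ! i) (cs ! ((i + 1) mod length cs))"
    unfolding has_cycle_def by blast
  have "length cs \<le> card path_V"
    using cs(2,3) by (metis card_mono distinct_card finite.emptyI finite.insertI path_V_def)
  then have "length cs = 3"
    using cs(1) by (simp add: path_V_def)
  then obtain a b c where abc: "cs = [a, b, c]"
    by (auto simp: numeral_3_eq_3 length_Suc_conv)
  have "adj path_E a b" "adj path_E b c" "adj path_E c a"
    using cs(4) abc by (auto dest: spec[of _ 0] spec[of _ 1] spec[of _ 2])
  then show False
    using cs(2,3) abc by (auto simp: adj_def path_E_def path_V_def doubleton_eq_iff)
qed

lemma is_tree_path: "is_tree path_V path_E"
proof -
  have "\<exists>u v. u \<in> path_V \<and> v \<in> path_V \<and> u \<noteq> v \<and> e = {u, v}" if "e \<in> path_E" for e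
  proof -
    have "e = {0, 1} \<or> e = {1, 2}"
      using that by (simp add: path_E_def)
    then show ?thesis
    proof
      assume "e = {0, 1}"
      then show ?thesis by (intro exI[of _ 0] exI[of _ 1]) (simp add: path_V_def)
    next
      assume "e = {1, 2}"
      then show ?thesis by (intro exI[of _ 1] exI[of _ 2]) (simp add: path_V_def)
    qed
  qed
  then have "simple_graph path_V path_E"
    by (simp add: simple_graph_def path_V_def)
  moreover have "adj path_E 0 1" "adj path_E 1 0" "adj path_E 1 2" "adj path_E 2 1"
    by (auto simp: adj_def path_E_def insert_commute)
  then have "connected_graph path_V path_E"
    unfolding connected_graph_def path_V_def by (auto intro: converse_rtrancl_into_rtrancl)
  ultimately show ?thesis
    using no_cycle_path by (simp add: is_tree_def path_V_def)
qed

text \<open>Simp rules about the path mention \<open>Suc 0\<close> because the simplifier rewrites \<open>1::nat\<close>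
  to \<open>Suc 0\<close>; the \<open>simp only\<close> steps further down unfold \<open>One_nat_def\<close> for the same reason.\<close>

lemma edge_bd_path_values [simp]:
  "edge_bd {0, Suc 0} {0} = (-1 :: 'k::field)" "edge_bd {0, Suc 0} {Suc 0} = (1 :: 'k)"
  "edge_bd {0, Suc 0} {2} = (0 :: 'k)" "edge_bd {Suc 0, 2} {0} = (0 :: 'k)"
  "edge_bd {Suc 0, 2} {Suc 0} = (-1 :: 'k)" "edge_bd {Suc 0, 2} {2} = (1 :: 'k)"
  by (simp_all add: edge_bd_singleton)

lemma independent_edge_bd_path:
  "funvs.independent (edge_bd ` edges path :: (nat set \<Rightarrow> 'k::field) set)"
proof -
  have "edge_bd {0, 1} \<notin> funvs.span {edge_bd {1, 2} :: nat set \<Rightarrow> 'k}"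
  proof
    assume "edge_bd {0, 1} \<in> funvs.span {edge_bd {1, 2} :: nat set \<Rightarrow> 'k}"
    then obtain c :: 'k where "edge_bd {0, 1} = (\<lambda>\<sigma>. c * edge_bd {1, 2 :: nat} \<sigma>)"
      unfolding funvs.span_singleton by blast
    then show False
      by (auto dest: fun_cong[where x = "{0}"])
  qed
  moreover have "funvs.independent {edge_bd {1, 2} :: nat set \<Rightarrow> 'k}"
    by (rule independent_edge_bd_single) simp
  ultimately show ?thesis
    by (simp add: edges_path funvs.independent_insert)
qed

lemma pers_betti_path_pos_dim:
  assumes "K \<subseteq> path" "0 < p"
  shows "pers_betti TYPE('k::field) K L p = 0"
proof (rule pers_betti_eq_0)
  have "(cycles path p :: (nat set \<Rightarrow> 'k) set) \<subseteq> {0}"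
  proof (cases "p = 1")
    case True
    then show ?thesis
      using cycles_1_subset_0[OF _ independent_edge_bd_path] by (simp add: path_eq)
  next
    case False
    then show ?thesis
      using assms(2) by (intro cycles_subset_0_above_dim_1) (auto simp: path_eq)
  qed
  then show "(cycles K p :: (nat set \<Rightarrow> 'k) set) \<subseteq> {0}"
    using cycles_mono[OF assms(1)] by blast
qed

lemma bdries_path:
  "(bdries path 0 :: (nat set \<Rightarrow> 'k::field) set)
    = {(\<lambda>\<sigma>. a * edge_bd {0, 1} \<sigma> + b * edge_bd {1, 2} \<sigma>) | a b. True}"
  unfolding bdries0_eq_span[OF finite_path] edges_path image_insert image_empty span_pair ..

lemma pers_betti_vertex_0_path:
  assumes "L \<subseteq> path"
  shows "pers_betti TYPE('k::field) {{0}} L 0 = 1"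
proof -
  have "y = 0" if y: "y \<in> (cycles {{0}} 0 \<inter> bdries L 0 :: (nat set \<Rightarrow> 'k) set)" for y
  proof -
    obtain a b where ab: "y = (\<lambda>\<sigma>. a * edge_bd {0, 1} \<sigma> + b * edge_bd {1, 2} \<sigma>)"
      using y bdries_mono[OF assms] bdries_path by blast
    have "y {1} = 0" "y {2} = 0"
      using y by (auto simp: cycles_0_eq)
    then have "a = 0" "b = 0"
      by (simp_all add: ab)
    then show "y = 0"
      by (simp add: ab fun_eq_iff)
  qed
  then have "fdim (cycles {{0}} 0 \<inter> bdries L 0 :: (nat set \<Rightarrow> 'k) set) = 0"
    by (intro fdim_le_zero) blast
  then show ?thesis
    by (simp add: pers_betti_0 Collect_conv_if)
qed

lemma pers_betti_0_path: "pers_betti TYPE('k::field) path path 0 = 1"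
proof -
  have inside: "{v} \<in> path" if "e \<in> edges path" "v \<in> e" for e v
    using that unfolding edges_path by (auto simp: path_eq)
  have "{\<sigma> \<in> path. card \<sigma> = 1} = {{0}, {1}, {2}}"
    by (auto simp: path_eq)
  moreover have "card (edges path) = 2"
    by (simp add: edges_path doubleton_eq_iff)
  ultimately show ?thesis
    by (simp add: pers_betti_0_edges_within[OF finite_path finite_path inside independent_edge_bd_path])
qed

lemma pers_betti_endpoints_path: "pers_betti TYPE('k::field) {{0}, {2}} path 0 = 1"
proof -
  define w :: "nat set \<Rightarrow> 'k" where "w \<sigma> = edge_bd {0, 1} \<sigma> + edge_bd {1, 2} \<sigma>" for \<sigma>
  have w: "w = delta {2} - delta {0}"
    by (simp add: w_def edge_bd_def fun_eq_iff numeral_2_eq_2)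
  have "cycles {{0}, {2}} 0 \<inter> bdries path 0 = funvs.span {w}"
  proof (intro equalityI subsetI)
    fix y :: "nat set \<Rightarrow> 'k" assume y: "y \<in> cycles {{0}, {2}} 0 \<inter> bdries path 0"
    then obtain a b :: 'k where ab: "y = (\<lambda>\<sigma>. a * edge_bd {0, 1} \<sigma> + b * edge_bd {1, 2} \<sigma>)"
      using bdries_path by blast
    have "y {1} = 0"
      using y by (auto simp: cycles_0_eq)
    then have "a = b"
      by (simp add: ab)
    then have "y = (\<lambda>\<sigma>. a * w \<sigma>)"
      by (simp add: ab w_def fun_eq_iff algebra_simps)
    then show "y \<in> funvs.span {w}"
      unfolding funvs.span_singleton by blast
  next
    fix y :: "nat set \<Rightarrow> 'k" assume "y \<in> funvs.span {w}"
    then obtain c :: 'k where c: "y = (\<lambda>\<sigma>. c * w \<sigma>)"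
      unfolding funvs.span_singleton by blast
    then have "y \<in> cycles {{0}, {2}} 0"
      by (auto simp: cycles_0_eq w delta_def)
    moreover have "y \<in> bdries path 0"
      unfolding bdries_path c w_def by (auto simp: algebra_simps)
    ultimately show "y \<in> cycles {{0}, {2}} 0 \<inter> bdries path 0" ..
  qed
  moreover have "w {2} = 1"
    by (simp add: w delta_def)
  then have "w \<noteq> 0"
    by auto
  ultimately have "fdim (cycles {{0}, {2}} 0 \<inter> bdries path 0 :: (nat set \<Rightarrow> 'k) set) = 1"
    by (simp add: fdim_span_independent funvs.independent_insert)
  then show ?thesis
    by (simp add: pers_betti_0 Collect_mem_insert del: insert_iff) auto
qed

section \<open>Three discrete Morse functions on the path\<close>

definition morse_f :: "nat set \<Rightarrow> real" where
  "morse_f \<sigma> = (if \<sigma> = {0} then 0 else if \<sigma> = {1} then 1 else if \<sigma> = {0, 1} then 2 else 3)"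

definition morse_f_stretched :: "nat set \<Rightarrow> real" where
  "morse_f_stretched \<sigma> = (if \<sigma> = {0} then 0 else if \<sigma> = {1} then 1 else if \<sigma> = {0, 1} then 4 else 9/2)"

definition morse_g :: "nat set \<Rightarrow> real" where
  "morse_g \<sigma> = (if \<sigma> = {0} then 0 else if \<sigma> = {2} then 1 else if \<sigma> = {1, 2} then 2 else 3/2)"

lemma morse_f_simps [simp]:
  "morse_f {0} = 0" "morse_f {Suc 0} = 1" "morse_f {2} = 3" "morse_f {0, Suc 0} = 2" "morse_f {Suc 0, 2} = 3"
  by (auto simp: morse_f_def doubleton_eq_iff)

lemma morse_f_stretched_simps [simp]:
  "morse_f_stretched {0} = 0" "morse_f_stretched {Suc 0} = 1" "morse_f_stretched {2} = 9/2"
  "morse_f_stretched {0, Suc 0} = 4" "morse_f_stretched {Suc 0, 2} = 9/2"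
  by (auto simp: morse_f_stretched_def doubleton_eq_iff)

lemma morse_g_simps [simp]:
  "morse_g {0} = 0" "morse_g {Suc 0} = 3/2" "morse_g {2} = 1" "morse_g {0, Suc 0} = 3/2" "morse_g {Suc 0, 2} = 2"
  by (auto simp: morse_g_def doubleton_eq_iff)

lemma dmf_morse_f: "dmf path_V path_E morse_f"
  unfolding dmf_def Let_def path_eq
  by (simp only: ball_simps Collect_mem_insert empty_Collect_eq One_nat_def morse_f_simps)
    (simp add: path_V_def path_E_def psubset_eq doubleton_eq_iff)

lemma dmf_morse_f_stretched: "dmf path_V path_E morse_f_stretched"
  unfolding dmf_def Let_def path_eq
  by (simp only: ball_simps Collect_mem_insert empty_Collect_eq One_nat_def morse_f_stretched_simps)
    (simp add: path_V_def path_E_def psubset_eq doubleton_eq_iff)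

lemma dmf_morse_g: "dmf path_V path_E morse_g"
  unfolding dmf_def Let_def path_eq
  by (simp only: ball_simps Collect_mem_insert empty_Collect_eq One_nat_def morse_g_simps)
    (simp add: path_V_def path_E_def psubset_eq doubleton_eq_iff)

lemma critical_path_iff:
  "critical path_V path_E h \<sigma> \<longleftrightarrow> \<sigma> \<in> {{0}, {1}, {2}, {0, 1}, {1, 2}} \<and>
     card {\<tau> \<in> {{0}, {1}, {2}, {0, 1}, {1, 2}}. h \<tau> = h \<sigma>} = 1"
  by (simp add: critical_def path_eq)

lemma crit_vals_morse_f: "crit_vals path_V path_E morse_f = [0, 1, 2]"
proof -
  have "{\<sigma>. critical path_V path_E morse_f \<sigma>} = {{0}, {1}, {0, 1}}"
    unfolding critical_path_iff
    by (simp only: Collect_mem_insert empty_Collect_eq One_nat_def morse_f_simps) (auto simp: doubleton_eq_iff)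
  then show ?thesis
    by (simp add: crit_vals_def)
qed

lemma crit_vals_morse_f_stretched: "crit_vals path_V path_E morse_f_stretched = [0, 1, 4]"
proof -
  have "{\<sigma>. critical path_V path_E morse_f_stretched \<sigma>} = {{0}, {1}, {0, 1}}"
    unfolding critical_path_iff
    by (simp only: Collect_mem_insert empty_Collect_eq One_nat_def morse_f_stretched_simps) (auto simp: doubleton_eq_iff)
  then show ?thesis
    by (simp add: crit_vals_def)
qed

lemma crit_vals_morse_g: "crit_vals path_V path_E morse_g = [0, 1, 2]"
proof -
  have "{\<sigma>. critical path_V path_E morse_g \<sigma>} = {{0}, {2}, {1, 2}}"
    unfolding critical_path_iff
    by (simp only: Collect_mem_insert empty_Collect_eq One_nat_def morse_g_simps) (auto simp: doubleton_eq_iff)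
  then show ?thesis
    by (simp add: crit_vals_def)
qed

lemma levels_morse_f:
  "level path_V path_E morse_f 0 = {{0}}"
  "level path_V path_E morse_f 1 = {{0}, {1}}"
  "level path_V path_E morse_f 2 = {{0}, {1}, {0, 1}}"
  by (auto simp: level_def path_eq)

lemma levels_morse_f_stretched:
  "level path_V path_E morse_f_stretched 0 = {{0}}"
  "level path_V path_E morse_f_stretched 1 = {{0}, {1}}"
  "level path_V path_E morse_f_stretched 4 = {{0}, {1}, {0, 1}}"
  by (auto simp: level_def path_eq)

lemma levels_morse_g:
  "level path_V path_E morse_g 0 = {{0}}"
  "level path_V path_E morse_g 1 = {{0}, {2}}"
  "level path_V path_E morse_g 2 = path"
  by (auto simp: level_def path_eq)

lemma level_betti_morse_f:
  assumes "i \<le> j" "j < 3"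
  shows "level_betti TYPE('k::field) path_V path_E morse_f 0 i j = (if i = 1 \<and> j = 1 then 2 else 1)"
proof -
  have "i = 0 \<or> i = 1 \<and> j = 1 \<or> i = 1 \<and> j = 2 \<or> i = 2 \<and> j = 2"
    using assms by auto
  then show ?thesis
    unfolding level_betti_def crit_vals_morse_f
    by (auto simp: levels_morse_f pers_betti_vertex_0_path[OF level_subset_simplices]
        pers_betti_two_vertices pers_betti_two_vertices_edge)
qed

lemma level_betti_morse_g:
  assumes "i \<le> j" "j < 3"
  shows "level_betti TYPE('k::field) path_V path_E morse_g 0 i j = (if i = 1 \<and> j = 1 then 2 else 1)"
proof -
  have "i = 0 \<or> i = 1 \<and> j = 1 \<or> i = 1 \<and> j = 2 \<or> i = 2 \<and> j = 2"
    using assms by auto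
  then show ?thesis
    unfolding level_betti_def crit_vals_morse_g
    by (auto simp: levels_morse_g pers_betti_vertex_0_path[OF level_subset_simplices]
        pers_betti_two_vertices pers_betti_endpoints_path pers_betti_0_path)
qed

lemma pers_equiv_morse_f_g: "pers_equiv TYPE('k::field) path_V path_E morse_f morse_g"
  unfolding pers_equiv_def
proof
  fix p
  show "pdiag TYPE('k) path_V path_E morse_f p = pdiag TYPE('k) path_V path_E morse_g p"
  proof (rule pdiag_cong)
    show "crit_vals path_V path_E morse_f = crit_vals path_V path_E morse_g"
      by (simp add: crit_vals_morse_f crit_vals_morse_g)
  next
    fix i j assume ij: "i \<le> j" "j < length (crit_vals path_V path_E morse_f)"
    show "level_betti TYPE('k) path_V path_E morse_f p i j = level_betti TYPE('k) path_V path_E morse_g p i j"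
    proof (cases "p = 0")
      case True
      then show ?thesis
        using ij by (simp add: crit_vals_morse_f level_betti_morse_f level_betti_morse_g)
    next
      case False
      then show ?thesis
        by (simp add: level_betti_def pers_betti_path_pos_dim level_subset_simplices)
    qed
  qed
qed

lemma not_pers_equiv_morse_f_stretched:
  "\<not> pers_equiv TYPE('k::field) path_V path_E morse_f morse_f_stretched"
proof
  have "pdiag TYPE('k) path_V path_E morse_f 0 (1, ereal 2) = 1"
    using pdiag_finite_point[of 1 2 path_V path_E morse_f "TYPE('k)" 0]
    by (simp add: crit_vals_morse_f level_betti_morse_f)
  moreover have "pdiag TYPE('k) path_V path_E morse_f_stretched 0 (1, ereal 2) = 0"
    by (rule pdiag_non_critical_death) (simp add: crit_vals_morse_f_stretched)
  moreover assume "pers_equiv TYPE('k) path_V path_E morse_f morse_f_stretched"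
  ultimately show False
    by (simp add: pers_equiv_def)
qed

lemma graph_equiv_morse_f_stretched: "graph_equiv path_V path_E morse_f morse_f_stretched"
proof (rule graph_equiv_if_same_levels)
  fix i assume "i < length (crit_vals path_V path_E morse_f)"
  then have "i = 0 \<or> i = 1 \<or> i = 2"
    by (auto simp: crit_vals_morse_f)
  then show "level path_V path_E morse_f (crit_vals path_V path_E morse_f ! i)
    = level path_V path_E morse_f_stretched (crit_vals path_V path_E morse_f_stretched ! i)"
    by (auto simp: crit_vals_morse_f crit_vals_morse_f_stretched levels_morse_f levels_morse_f_stretched)
qed (simp add: crit_vals_morse_f crit_vals_morse_f_stretched)

lemma not_graph_equiv_morse_f_g: "\<not> graph_equiv path_V path_E morse_f morse_g"
proof
  assume "graph_equiv path_V path_E morse_f morse_g"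
  then have "complex_iso (level path_V path_E morse_f 2) (level path_V path_E morse_g 2)"
    unfolding graph_equiv_def crit_vals_morse_f crit_vals_morse_g by force
  then have "card (cverts (level path_V path_E morse_f 2)) = card (cverts (level path_V path_E morse_g 2))"
    by (rule complex_iso_card_cverts)
  moreover have "cverts (level path_V path_E morse_f 2) = {0, 1}"
    "cverts (level path_V path_E morse_g 2) = {0, 1, 2}"
    by (auto simp: levels_morse_f levels_morse_g cverts_def path_eq doubleton_eq_iff)
  ultimately show False
    by simp
qed

theorem mainTheorem10:
  shows "\<exists>(V :: nat set) E. is_tree V E \<and>
     (\<exists>f g. dmf V E f \<and> dmf V E g \<and> graph_equiv V E f g \<and>
            \<not> pers_equiv TYPE('k::field) V E f g) \<and>
     (\<exists>f g. dmf V E f \<and> dmf V E g \<and> pers_equiv TYPE('k::field) V E f g \<and>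
            \<not> graph_equiv V E f g)"
  using is_tree_path dmf_morse_f dmf_morse_f_stretched dmf_morse_g
    graph_equiv_morse_f_stretched not_pers_equiv_morse_f_stretched
    pers_equiv_morse_f_g not_graph_equiv_morse_f_g
  by blast

end
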